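(* Consider the 2-node network game with market maker payoff $\pi^M=W_{con}$. Suppose $a_1=a_2=a>0$, $c_1=c_2=c>0$, $b_1,b_2>0$ with $1<b_1/b_2\le 3$, and the line capacity $f_{12}$ satisfies $$\frac{a}{3b_1+2c}<f_{12}<\min\Big\{\frac{a}{b_2+2c},\ \frac{a}{b_1},\ f_0\Big\},$$ where $$f_0=\frac{ab_2\big[b_1+b_2+c(3-b_1/b_2)\big]}{b_1b_2(b_1+b_2)+b_1(b_1+5b_2)c+2(b_1+b_2)c^2}.$$ Then the game has no GNE.
   Context: 2-node network game. There are generators $G_1,G_2$. Generator $k$ chooses $q_k\ge 0$ and has profit $\pi^G_k=q_kp_k(q_k+r_k)-c_kq_k^2$, where $p_k(d)=a_k-b_kd$. The market maker chooses $r\in\mathbb{R}$ and sets $r_1=r$, $r_2=-r$, subject to $-q_1\le r\le q_2$ and $-f_{12}\le r\le f_{12}$. Node $k$ receives $q_k+r_k$. Consumer surplus objective. The market maker maximizes $$W_{con}(q,r)=\sum_{k=1}^2\Big(\int_0^{q_k+r_k}p_k(w)\,dw-(q_k+r_k)p_k(q_k+r_k)\Big).$$ GNE. A triple $(q_1^*,q_2^*,r^* )$ with $r^*$ feasible given $q^*$ is a GNE if both of the following hold: - each $q_k^*$ maximizes $\pi^G_k$ over $q_k\ge0$, given the other generator's quantity and $r^*$; - $r^*$ maximizes $W_{con}(q^*,\cdot)$ over the feasible set determined by $q^*$. *)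

theory Defs
  imports "HOL-Analysis.Analysis"
begin

definition price :: "real \<Rightarrow> real \<Rightarrow> real \<Rightarrow> real" where
  "price a b d = a - b * d"

text \<open>Generator profit: q p(q + r) - c q^2, where r is the net import at its node.\<close>
definition gen_profit :: "real \<Rightarrow> real \<Rightarrow> real \<Rightarrow> real \<Rightarrow> real \<Rightarrow> real" where
  "gen_profit a b c q r = q * price a b (q + r) - c * q\<^sup>2"

definition node_cs :: "real \<Rightarrow> real \<Rightarrow> real \<Rightarrow> real" where
  "node_cs a b x = integral {0..x} (\<lambda>w. price a b w) - x * price a b x"

text \<open>Market maker objective W_con, with r_1 = r, r_2 = -r.\<close>
definition W_con :: "real \<Rightarrow> real \<Rightarrow> real \<Rightarrow> real \<Rightarrow> real \<Rightarrow> real \<Rightarrow> real \<Rightarrow> real" where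
  "W_con a1 b1 a2 b2 q1 q2 r = node_cs a1 b1 (q1 + r) + node_cs a2 b2 (q2 + (- r))"

definition mm_feasible :: "real \<Rightarrow> real \<Rightarrow> real \<Rightarrow> real \<Rightarrow> bool" where
  "mm_feasible f q1 q2 r \<longleftrightarrow> - q1 \<le> r \<and> r \<le> q2 \<and> - f \<le> r \<and> r \<le> f"

definition is_GNE ::
  "real \<Rightarrow> real \<Rightarrow> real \<Rightarrow> real \<Rightarrow> real \<Rightarrow> real \<Rightarrow> real \<Rightarrow> real \<Rightarrow> real \<Rightarrow> real \<Rightarrow> bool" where
  "is_GNE a1 b1 c1 a2 b2 c2 f q1 q2 r \<longleftrightarrow>
     q1 \<ge> 0 \<and> q2 \<ge> 0 \<and> mm_feasible f q1 q2 r \<and>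
     (\<forall>q1'. q1' \<ge> 0 \<longrightarrow> gen_profit a1 b1 c1 q1' r \<le> gen_profit a1 b1 c1 q1 r) \<and>
     (\<forall>q2'. q2' \<ge> 0 \<longrightarrow> gen_profit a2 b2 c2 q2' (- r) \<le> gen_profit a2 b2 c2 q2 (- r)) \<and>
     (\<forall>r'. mm_feasible f q1 q2 r' \<longrightarrow> W_con a1 b1 a2 b2 q1 q2 r' \<le> W_con a1 b1 a2 b2 q1 q2 r)"

end

theory Submission
  imports Defs
begin

text \<open>
  On its feasible interval the consumer surplus is the convex quadratic
  \<open>b\<^sub>1(q\<^sub>1+r)\<^sup>2/2 + b\<^sub>2(q\<^sub>2-r)\<^sup>2/2\<close> in the market maker's choice \<open>r\<close>, so at an
  equilibrium \<open>r\<close> sits at an endpoint of \<open>[max(-q\<^sub>1,-f), min(q\<^sub>2,f)]\<close>, while each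
  generator plays its unique best response \<open>2(b\<^sub>k+c)q\<^sub>k = a - b\<^sub>kr\<^sub>k\<close>. The capacity window
  rules out every endpoint: a node exporting its whole output would need
  \<open>q\<^sub>k = a/(b\<^sub>k+2c) > f\<close>; with \<open>r = f\<close> node 1 produces less than \<open>f\<close> and the
  market maker prefers \<open>r = -q\<^sub>1\<close> (this is where \<open>f < f\<^sub>0\<close> enters); with \<open>r = -f\<close> it
  prefers the opposite endpoint because \<open>b\<^sub>1 > b\<^sub>2\<close>.
\<close>

definition mm_surplus :: "real \<Rightarrow> real \<Rightarrow> real \<Rightarrow> real \<Rightarrow> real \<Rightarrow> real" where
  "mm_surplus b1 b2 q1 q2 r = b1 * (q1 + r)\<^sup>2 / 2 + b2 * (q2 - r)\<^sup>2 / 2"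

definition capacity_threshold :: "real \<Rightarrow> real \<Rightarrow> real \<Rightarrow> real \<Rightarrow> real" where
  "capacity_threshold a b1 b2 c = a * b2 * (b1 + b2 + c * (3 - b1 / b2)) /
     (b1 * b2 * (b1 + b2) + b1 * (b1 + 5 * b2) * c + 2 * (b1 + b2) * c\<^sup>2)"

lemma node_cs_eq:
  assumes "x \<ge> 0"
  shows "node_cs a b x = b * x\<^sup>2 / 2"
proof -
  have "\<And>w. ((\<lambda>w. a * w - b * w\<^sup>2 / 2) has_vector_derivative (a - b * w)) (at w within {0..x})"
    unfolding has_real_derivative_iff_has_vector_derivative[symmetric]
    by (auto intro!: derivative_eq_intros)
  then have "((\<lambda>w. a - b * w) has_integral
      ((a * x - b * x\<^sup>2 / 2) - (a * 0 - b * 0\<^sup>2 / 2))) {0..x}"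
    by (intro fundamental_theorem_of_calculus[OF assms]) auto
  then have "integral {0..x} (price a b) = a * x - b * x\<^sup>2 / 2"
    unfolding price_def by (simp add: integral_unique)
  then show ?thesis
    unfolding node_cs_def price_def by (simp add: power2_eq_square algebra_simps)
qed

lemma mm_feasible_iff: "mm_feasible f q1 q2 r \<longleftrightarrow> max (- q1) (- f) \<le> r \<and> r \<le> min q2 f"
  unfolding mm_feasible_def by auto

lemma W_con_eq_mm_surplus:
  assumes "mm_feasible f q1 q2 r"
  shows "W_con a1 b1 a2 b2 q1 q2 r = mm_surplus b1 b2 q1 q2 r"
  using assms unfolding W_con_def mm_feasible_def mm_surplus_def by (simp add: node_cs_eq)

lemma mm_surplus_quadratic:
  "mm_surplus b1 b2 q1 q2 r =
     (b1 + b2) / 2 * r\<^sup>2 + (b1 * q1 - b2 * q2) * r + (b1 * q1\<^sup>2 + b2 * q2\<^sup>2) / 2"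
  unfolding mm_surplus_def by (simp add: field_simps power2_eq_square)

lemma gen_profit_argmax:
  assumes "b + c > 0" and "b * r \<le> a"
    and max: "\<forall>q'. q' \<ge> 0 \<longrightarrow> gen_profit a b c q' r \<le> gen_profit a b c q r"
  shows "2 * (b + c) * q = a - b * r"
proof -
  define q\<^sub>0 where "q\<^sub>0 = (a - b * r) / (2 * (b + c))"
  have q\<^sub>0: "2 * (b + c) * q\<^sub>0 = a - b * r" "q\<^sub>0 \<ge> 0"
    unfolding q\<^sub>0_def using assms(1,2) by auto
  have "gen_profit a b c q\<^sub>0 r - gen_profit a b c q r
      = (q\<^sub>0 - q) * (a - b * r) - (b + c) * (q\<^sub>0\<^sup>2 - q\<^sup>2)"
    unfolding gen_profit_def price_def by (simp add: algebra_simps power2_eq_square)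
  also have "\<dots> = (b + c) * (q - q\<^sub>0)\<^sup>2"
    unfolding q\<^sub>0(1)[symmetric] by (simp add: algebra_simps power2_eq_square)
  finally have "(b + c) * (q - q\<^sub>0)\<^sup>2 \<le> 0"
    using max q\<^sub>0(2) by force
  then have "q = q\<^sub>0"
    using assms(1) by (simp add: mult_le_0_iff)
  with q\<^sub>0(1) show ?thesis by simp
qed

lemma export_all_best_response_gt_capacity:
  fixes a b c f q :: real
  assumes "b + 2 * c > 0" and "2 * (b + c) * q = a - b * (- q)" and "f * (b + 2 * c) < a"
  shows "f < q"
proof -
  have "q * (b + 2 * c) = a"
    using assms(2) by (simp add: algebra_simps)
  with assms(1,3) show ?thesis
    by (metis mult_less_cancel_right_pos)
qed

lemma convex_quadratic_argmax_endpoint: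
  fixes g :: "real \<Rightarrow> real"
  assumes g: "\<And>x. g x = k * x\<^sup>2 + \<beta> * x + \<gamma>" and "k > 0"
    and "L \<le> r" "r \<le> U" and max: "\<And>x. L \<le> x \<Longrightarrow> x \<le> U \<Longrightarrow> g x \<le> g r"
  shows "r = L \<or> r = U"
proof (rule ccontr)
  assume "\<not> (r = L \<or> r = U)"
  with assms(3,4) have "L < r" "r < U" by auto
  have diff: "g x - g r = (x - r) * (k * (x + r) + \<beta>)" for x
    unfolding g by (simp add: algebra_simps power2_eq_square)
  have "(U - r) * (k * (U + r) + \<beta>) \<le> 0" "(L - r) * (k * (L + r) + \<beta>) \<le> 0"
    using max[of U] max[of L] diff[of U] diff[of L] \<open>L < r\<close> \<open>r < U\<close> by auto
  then have "k * (U + r) + \<beta> \<le> 0" "k * (L + r) + \<beta> \<ge> 0"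
    using \<open>L < r\<close> \<open>r < U\<close> by (auto simp: mult_le_0_iff)
  then have "k * (U - L) \<le> 0" by (simp add: algebra_simps)
  with \<open>k > 0\<close> \<open>L < r\<close> \<open>r < U\<close> show False
    by (simp add: mult_le_0_iff)
qed

lemma is_GNE_necessary:
  assumes "is_GNE a1 b1 c1 a2 b2 c2 f q1 q2 r"
    and "b1 > 0" "b2 > 0" "c1 > 0" "c2 > 0" "f * b1 \<le> a1" "f * b2 \<le> a2"
  shows "2 * (b1 + c1) * q1 = a1 - b1 * r"
    and "2 * (b2 + c2) * q2 = a2 - b2 * (- r)"
    and "r = max (- q1) (- f) \<or> r = min q2 f"
    and "\<And>r'. mm_feasible f q1 q2 r' \<Longrightarrow> mm_surplus b1 b2 q1 q2 r' \<le> mm_surplus b1 b2 q1 q2 r"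
proof -
  have feas: "mm_feasible f q1 q2 r"
    using assms(1) unfolding is_GNE_def by blast
  then have "- f \<le> r" "r \<le> f"
    unfolding mm_feasible_def by auto
  then have "b1 * r \<le> b1 * f" "b2 * (- r) \<le> b2 * f"
    using assms(2,3) mult_left_mono[of "- r" f b2] by simp_all
  then have "b1 * r \<le> a1" "b2 * (- r) \<le> a2"
    using assms(6,7) by (simp_all add: mult.commute)
  moreover have "b1 + c1 > 0" "b2 + c2 > 0"
    using assms(2-5) by simp_all
  moreover have
    "\<forall>q'. q' \<ge> 0 \<longrightarrow> gen_profit a1 b1 c1 q' r \<le> gen_profit a1 b1 c1 q1 r"
    "\<forall>q'. q' \<ge> 0 \<longrightarrow> gen_profit a2 b2 c2 q' (- r) \<le> gen_profit a2 b2 c2 q2 (- r)"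
    using assms(1) unfolding is_GNE_def by simp_all
  ultimately show "2 * (b1 + c1) * q1 = a1 - b1 * r" "2 * (b2 + c2) * q2 = a2 - b2 * (- r)"
    by (blast intro: gen_profit_argmax)+
  show max: "mm_surplus b1 b2 q1 q2 r' \<le> mm_surplus b1 b2 q1 q2 r" if "mm_feasible f q1 q2 r'" for r'
    using assms(1) that feas W_con_eq_mm_surplus unfolding is_GNE_def by metis
  show "r = max (- q1) (- f) \<or> r = min q2 f"
    by (rule convex_quadratic_argmax_endpoint[of "mm_surplus b1 b2 q1 q2" "(b1 + b2) / 2"])
      (use assms(2,3) feas max in \<open>auto simp: mm_surplus_quadratic mm_feasible_iff\<close>)
qed

lemma capacity_threshold_eq:
  assumes "b2 > 0"
  shows "capacity_threshold a b1 b2 c = a * (b1 * b2 + b2\<^sup>2 + 3 * b2 * c - b1 * c) /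
    (b1 * b2 * (b1 + b2) + b1 * (b1 + 5 * b2) * c + 2 * (b1 + b2) * c\<^sup>2)"
proof -
  have "b2 * (b1 + b2 + c * (3 - b1 / b2)) = b1 * b2 + b2\<^sup>2 + 3 * b2 * c - b1 * c"
    using assms by (simp add: field_simps power2_eq_square)
  then show ?thesis
    unfolding capacity_threshold_def by (simp add: mult.assoc)
qed

lemma capacity_threshold_le:
  assumes "a > 0" "c > 0" "b2 > 0" "b2 < b1"
  shows "capacity_threshold a b1 b2 c \<le> a / (b1 + 2 * c)"
proof -
  define N where "N = b1 * b2 + b2\<^sup>2 + 3 * b2 * c - b1 * c"
  define D where "D = b1 * b2 * (b1 + b2) + b1 * (b1 + 5 * b2) * c + 2 * (b1 + b2) * c\<^sup>2"
  have "D - N * (b1 + 2 * c) = 2 * c * (b1 - b2) * (b1 + b2 + 2 * c)"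
    unfolding N_def D_def by (simp add: algebra_simps power2_eq_square)
  then have "N * (b1 + 2 * c) \<le> D"
    using assms by (smt (verit) mult_pos_pos)
  moreover have "D > 0"
    unfolding D_def using assms by (simp add: add_pos_pos)
  ultimately have "a * N / D \<le> a / (b1 + 2 * c)"
    using assms mult_left_mono[of "N * (b1 + 2 * c)" D a] by (simp add: divide_simps ac_simps)
  then show ?thesis
    unfolding N_def D_def using capacity_threshold_eq assms(3) by simp
qed

lemma mm_surplus_import_cap_lt_export_all:
  assumes "c > 0" "b1 > 0" "b2 > 0" "f > 0" "q1 \<ge> 0"
    and e1: "2 * (b1 + c) * q1 = a - b1 * f" and e2: "2 * (b2 + c) * q2 = a + b2 * f"
    and "f < capacity_threshold a b1 b2 c"
  shows "mm_surplus b1 b2 q1 q2 f < mm_surplus b1 b2 q1 q2 (- q1)"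
proof -
  define N where "N = b1 * b2 + b2\<^sup>2 + 3 * b2 * c - b1 * c"
  define D where "D = b1 * b2 * (b1 + b2) + b1 * (b1 + 5 * b2) * c + 2 * (b1 + b2) * c\<^sup>2"
  have "D > 0"
    unfolding D_def using assms by (simp add: add_pos_pos)
  moreover have "capacity_threshold a b1 b2 c = a * N / D"
    unfolding N_def D_def using capacity_threshold_eq assms(3) .
  ultimately have "f * D < a * N"
    using assms(8) by (simp add: pos_less_divide_eq)
  have "2 * (b1 + c) * (b2 + c) * (2 * b2 * (q1 + q2) - (b1 + b2) * (q1 + f))
      = 2 * b2 * (b1 + c) * (2 * (b2 + c) * q2) - (b1 - b2) * (b2 + c) * (2 * (b1 + c) * q1)
        - 2 * (b1 + b2) * (b1 + c) * (b2 + c) * f"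
    by (simp add: algebra_simps)
  also have "\<dots> = a * N - f * D"
    unfolding e1 e2 N_def D_def by (simp add: algebra_simps power2_eq_square)
  finally have "2 * b2 * (q1 + q2) - (b1 + b2) * (q1 + f) > 0"
    using \<open>f * D < a * N\<close> assms(1-3) by (smt (verit) mult_pos_pos zero_less_mult_iff)
  moreover have "mm_surplus b1 b2 q1 q2 (- q1) - mm_surplus b1 b2 q1 q2 f
      = (q1 + f) * (2 * b2 * (q1 + q2) - (b1 + b2) * (q1 + f)) / 2"
    unfolding mm_surplus_def by (simp add: field_simps power2_eq_square)
  ultimately show ?thesis
    using assms(4,5) by (smt (verit) divide_pos_pos mult_pos_pos)
qed

lemma mm_surplus_export_cap_lt_import_cap:
  assumes "a > 0" "c > 0" "b2 > 0" "b2 < b1" "f > 0"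
    and e1: "2 * (b1 + c) * q1 = a + b1 * f" and e2: "2 * (b2 + c) * q2 = a - b2 * f"
  shows "mm_surplus b1 b2 q1 q2 (- f) < mm_surplus b1 b2 q1 q2 f"
proof -
  have "2 * (b1 + c) * (b2 + c) * (b1 * q1 - b2 * q2)
      = b1 * (b2 + c) * (2 * (b1 + c) * q1) - b2 * (b1 + c) * (2 * (b2 + c) * q2)"
    by (simp add: algebra_simps)
  also have "\<dots> = a * c * (b1 - b2) + f * (b1\<^sup>2 * (b2 + c) + b2\<^sup>2 * (b1 + c))"
    unfolding e1 e2 by (simp add: algebra_simps power2_eq_square)
  also have "\<dots> > 0"
    using assms by (intro add_pos_pos mult_pos_pos) auto
  moreover have "2 * (b1 + c) * (b2 + c) > 0"
    using assms(2-4) by simp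
  ultimately have "b1 * q1 - b2 * q2 > 0"
    using zero_less_mult_pos by metis
  moreover have "mm_surplus b1 b2 q1 q2 f - mm_surplus b1 b2 q1 q2 (- f) = 2 * f * (b1 * q1 - b2 * q2)"
    unfolding mm_surplus_def by (simp add: field_simps power2_eq_square)
  ultimately show ?thesis
    using assms(5) by (smt (verit) mult_pos_pos)
qed

lemma mm_surplus_export_cap_lt_import_all:
  assumes "b2 > 0" "b2 < b1" "q2 \<ge> 0" "f > 0" "f < q1"
  shows "mm_surplus b1 b2 q1 q2 (- f) < mm_surplus b1 b2 q1 q2 q2"
proof -
  have "b2 * (q2 + f) < b1 * (q2 + f)"
    using assms(2-4) by (intro mult_strict_right_mono) auto
  moreover have "b1 * (q2 + f) \<le> b1 * (2 * q1 + q2 - f)"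
    using assms by (simp add: mult_left_mono)
  ultimately have "(q2 + f) * (b1 * (2 * q1 + q2 - f) - b2 * (q2 + f)) > 0"
    using assms(3,4) by (intro mult_pos_pos) linarith+
  moreover have "mm_surplus b1 b2 q1 q2 q2 - mm_surplus b1 b2 q1 q2 (- f)
      = (q2 + f) * (b1 * (2 * q1 + q2 - f) - b2 * (q2 + f)) / 2"
    unfolding mm_surplus_def by (simp add: field_simps power2_eq_square)
  ultimately show ?thesis by simp
qed

lemma not_is_GNE_in_capacity_window:
  assumes "c > 0" "b2 > 0" "b2 < b1" "f > 0"
    and "a < f * (3 * b1 + 2 * c)" "f * (b2 + 2 * c) < a" "f * (b1 + 2 * c) < a"
    and f0: "f < capacity_threshold a b1 b2 c"
  shows "\<not> is_GNE a b1 c a b2 c f q1 q2 r"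
proof
  assume G: "is_GNE a b1 c a b2 c f q1 q2 r"
  have "a > 0" "b1 > 0"
    using assms(1-4,6) by (smt (verit) mult_pos_pos)+
  have "f * b1 \<le> a" "f * b2 \<le> a"
    using assms(1,4,6,7) by (smt (verit) mult_pos_pos distrib_left)+
  note GNE = is_GNE_necessary[OF G \<open>b1 > 0\<close> assms(2,1,1) this]
  have "q1 \<ge> 0" "q2 \<ge> 0" and feasible: "- q1 \<le> r" "r \<le> q2" "- f \<le> r" "r \<le> f"
    using G unfolding is_GNE_def mm_feasible_def by auto
  consider "r = q2" | "r = f" "f < q2" | "r = - q1" | "r = - f" "f < q1"
    using GNE(3) by linarith
  then show False
  proof cases
    case 1
    then show False
      using export_all_best_response_gt_capacity[of b2 c q2 a f] GNE(2) assms(1,2,6) feasible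
      by simp
  next
    case 2
    with GNE(1) assms(5) have "2 * (b1 + c) * q1 < 2 * (b1 + c) * f"
      by (simp add: algebra_simps)
    then have "q1 < f"
      using assms(1) \<open>b1 > 0\<close> by simp
    then show False
      using mm_surplus_import_cap_lt_export_all[of c b1 b2 f q1 a q2] GNE(1,2) GNE(4)[of "- q1"] 2
        assms(1,2,4) f0 \<open>b1 > 0\<close> \<open>q1 \<ge> 0\<close> \<open>q2 \<ge> 0\<close>
      by (simp add: mm_feasible_def)
  next
    case 3
    then show False
      using export_all_best_response_gt_capacity[of b1 c q1 a f] GNE(1) assms(1,7) \<open>b1 > 0\<close> feasible
      by simp
  next
    case 4
    show False
    proof (cases "f \<le> q2")
      case True
      then show False
        using mm_surplus_export_cap_lt_import_cap[of a c b2 b1 f q1 q2] GNE(1,2) GNE(4)[of f] 4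
          assms(1-4) \<open>a > 0\<close>
        by (simp add: mm_feasible_def)
    next
      case False
      then show False
        using mm_surplus_export_cap_lt_import_all[of b2 b1 q2 f q1] GNE(4)[of q2] 4
          assms(2-4) \<open>q2 \<ge> 0\<close>
        by (simp add: mm_feasible_def)
    qed
  qed
qed

theorem lemma1:
  fixes a b1 b2 c f :: real
  assumes "a > 0" and "c > 0" and "b1 > 0" and "b2 > 0"
    and "1 < b1 / b2" and "b1 / b2 \<le> 3"
    and "a / (3 * b1 + 2 * c) < f"
    and "f < a / (b2 + 2 * c)" and "f < a / b1"
    and "f < a * b2 * (b1 + b2 + c * (3 - b1 / b2)) /
             (b1 * b2 * (b1 + b2) + b1 * (b1 + 5 * b2) * c + 2 * (b1 + b2) * c\<^sup>2)"
  shows "\<not> (\<exists>q1 q2 r. is_GNE a b1 c a b2 c f q1 q2 r)"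
proof -
  have "b2 < b1"
    using assms(4,5) by (simp add: field_simps)
  have f0: "f < capacity_threshold a b1 b2 c"
    using assms(10) unfolding capacity_threshold_def .
  then have "f < a / (b1 + 2 * c)"
    using capacity_threshold_le[OF assms(1,2,4) \<open>b2 < b1\<close>] by linarith
  then have bounds: "a < f * (3 * b1 + 2 * c)" "f * (b2 + 2 * c) < a" "f * (b1 + 2 * c) < a"
    using assms(1-4,7,8) by (simp_all add: pos_divide_less_eq pos_less_divide_eq)
  moreover have "f > 0"
    using bounds(1) assms(1-3) by (smt (verit) mult_nonpos_nonneg)
  ultimately show ?thesis
    using not_is_GNE_in_capacity_window[OF assms(2,4) \<open>b2 < b1\<close> _ _ _ _ f0] by blast
qed

end
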